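(* Let $\lambda_1,\dots,\lambda_r$ be dominant integral weights of $\mathfrak{g}$ and let $b_1,\dots,b_r\in(F^\times)^N$ satisfy $m(b_i)\ne m(b_j)$ whenever $i\ne j$. Then $V(\lambda,b)=V_{\lambda_1}(b_1)\otimes\cdots\otimes V_{\lambda_r}(b_r)$ is a finite-dimensional simple $\mathcal{L}$-module.
   Context: $F$ is an algebraically closed field of characteristic zero; $\mathfrak{g}$ is a finite-dimensional simple Lie algebra over $F$ with fixed Cartan subalgebra $\mathfrak{h}$ and base $\Delta$ of simple roots; $\sigma_1,\dots,\sigma_N$ are pairwise commuting automorphisms of $\mathfrak{g}$ of finite orders $m_1,\dots,m_N$; $\xi_i\in F$ is a fixed primitive $m_i$-th root of unity. $G=\mathbb{Z}/m_1\mathbb{Z}\times\cdots\times\mathbb{Z}/m_N\mathbb{Z}$, $\bar k$ is the image of $k\in\mathbb{Z}^N$, $\mathfrak{g}_{\bar k}=\{x\in\mathfrak{g}:\sigma_ix=\xi_i^{k_i}x\ \forall i\}$. $R=F[t_1^{\pm1},\dots,t_N^{\pm1}]$, $t^k=t_1^{k_1}\cdots t_N^{k_N}$. The multiloop algebra is $\mathcal{L}=\bigoplus_{k\in\mathbb{Z}^N}\mathfrak{g}_{\bar k}\otimes Ft^k\subseteq\mathfrak{g}\otimes R$ with pointwise bracket $[x\otimes f,y\otimes g]=[x,y]\otimes fg$. For $b=(b_1,\dots,b_N)\in(F^\times)^N$, $m(b)=(b_1^{m_1},\dots,b_N^{m_N})$. For a dominant integral weight $\lambda$, $V_\lambda$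 is the simple $\mathfrak{g}$-module of highest weight $\lambda$ and $V_\lambda(b)$ is the $\mathcal{L}$-module $V_\lambda$ with action $(x\otimes f).v=f(b)\,x.v$; $V(\lambda,b)$ carries the tensor product $\mathcal{L}$-action. *)

theory Defs
  imports Main "HOL-Computational_Algebra.Polynomial"
begin

definition alg_closed :: "'a::field itself \<Rightarrow> bool" where
  "alg_closed _ \<longleftrightarrow> (\<forall>p::'a poly. degree p \<ge> 1 \<longrightarrow> (\<exists>x. poly p x = 0))"

definition lie_algebra :: "('a::field \<Rightarrow> 'g::ab_group_add \<Rightarrow> 'g) \<Rightarrow> ('g \<Rightarrow> 'g \<Rightarrow> 'g) \<Rightarrow> bool" where
  "lie_algebra scl br \<longleftrightarrow>
     vector_space scl \<and>
     (\<forall>a x y z. br (scl a x + y) z = scl a (br x z) + br y z) \<and>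
     (\<forall>x. br x x = 0) \<and>
     (\<forall>x y z. br x (br y z) + br y (br z x) + br z (br x y) = 0)"

definition fin_dim :: "('a::field \<Rightarrow> 'g::ab_group_add \<Rightarrow> 'g) \<Rightarrow> bool" where
  "fin_dim scl \<longleftrightarrow> (\<exists>B. finite B \<and> module.span scl B = UNIV)"

definition lie_ideal :: "('a::field \<Rightarrow> 'g::ab_group_add \<Rightarrow> 'g) \<Rightarrow> ('g \<Rightarrow> 'g \<Rightarrow> 'g) \<Rightarrow> 'g set \<Rightarrow> bool" where
  "lie_ideal scl br I \<longleftrightarrow> module.subspace scl I \<and> (\<forall>x\<in>I. \<forall>y. br y x \<in> I)"

definition simple_lie_algebra :: "('a::field \<Rightarrow> 'g::ab_group_add \<Rightarrow> 'g) \<Rightarrow> ('g \<Rightarrow> 'g \<Rightarrow> 'g) \<Rightarrow> bool" where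
  "simple_lie_algebra scl br \<longleftrightarrow> lie_algebra scl br \<and> fin_dim scl \<and>
     (\<exists>x y. br x y \<noteq> 0) \<and>
     (\<forall>I. lie_ideal scl br I \<longrightarrow> I = {0} \<or> I = UNIV)"

definition lie_automorphism :: "('a::field \<Rightarrow> 'g::ab_group_add \<Rightarrow> 'g) \<Rightarrow> ('g \<Rightarrow> 'g \<Rightarrow> 'g) \<Rightarrow> ('g \<Rightarrow> 'g) \<Rightarrow> bool" where
  "lie_automorphism scl br \<sigma> \<longleftrightarrow> Vector_Spaces.linear scl scl \<sigma> \<and> bij \<sigma> \<and>
     (\<forall>x y. \<sigma> (br x y) = br (\<sigma> x) (\<sigma> y))"

definition has_order :: "('g \<Rightarrow> 'g) \<Rightarrow> nat \<Rightarrow> bool" where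
  "has_order \<sigma> m \<longleftrightarrow> m \<ge> 1 \<and> (\<sigma> ^^ m) = id \<and> (\<forall>j. 0 < j \<and> j < m \<longrightarrow> (\<sigma> ^^ j) \<noteq> id)"

definition primitive_root :: "'a::field \<Rightarrow> nat \<Rightarrow> bool" where
  "primitive_root \<xi> m \<longleftrightarrow> m \<ge> 1 \<and> \<xi> ^ m = 1 \<and> (\<forall>j. 0 < j \<and> j < m \<longrightarrow> \<xi> ^ j \<noteq> 1)"

definition grade_space ::
  "('a::field \<Rightarrow> 'g::ab_group_add \<Rightarrow> 'g) \<Rightarrow> nat \<Rightarrow> (nat \<Rightarrow> 'g \<Rightarrow> 'g) \<Rightarrow> (nat \<Rightarrow> 'a) \<Rightarrow> (nat \<Rightarrow> int) \<Rightarrow> 'g set" where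
  "grade_space scl N \<sigma> \<xi> k = {x. \<forall>i<N. \<sigma> i x = scl (\<xi> i powi k i) x}"

text \<open>A representation of g on F^d: rho x is a d x d matrix (entries rho x p q, p q < d).
  Vectors of F^d are functions nat => F vanishing outside {..<d}.\<close>

definition vec_space :: "nat \<Rightarrow> (nat \<Rightarrow> 'a::field) set" where
  "vec_space d = {v. \<forall>p. p \<ge> d \<longrightarrow> v p = 0}"

definition F_subspace :: "('i \<Rightarrow> 'a::field) set \<Rightarrow> bool" where
  "F_subspace W \<longleftrightarrow> (\<lambda>_. 0) \<in> W \<and> (\<forall>v\<in>W. \<forall>w\<in>W. (\<lambda>i. v i + w i) \<in> W) \<and>
     (\<forall>c. \<forall>v\<in>W. (\<lambda>i. c * v i) \<in> W)"

definition mat_vec :: "nat \<Rightarrow> (nat \<Rightarrow> nat \<Rightarrow> 'a::field) \<Rightarrow> (nat \<Rightarrow> 'a) \<Rightarrow> (nat \<Rightarrow> 'a)" where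
  "mat_vec d A v = (\<lambda>p. if p < d then (\<Sum>q<d. A p q * v q) else 0)"

definition lie_rep ::
  "('a::field \<Rightarrow> 'g::ab_group_add \<Rightarrow> 'g) \<Rightarrow> ('g \<Rightarrow> 'g \<Rightarrow> 'g) \<Rightarrow> nat \<Rightarrow> ('g \<Rightarrow> nat \<Rightarrow> nat \<Rightarrow> 'a) \<Rightarrow> bool" where
  "lie_rep scl br d \<rho> \<longleftrightarrow>
     (\<forall>a x y p q. p < d \<and> q < d \<longrightarrow> \<rho> (scl a x + y) p q = a * \<rho> x p q + \<rho> y p q) \<and>
     (\<forall>x y p q. p < d \<and> q < d \<longrightarrow>
        \<rho> (br x y) p q = (\<Sum>l<d. \<rho> x p l * \<rho> y l q - \<rho> y p l * \<rho> x l q))"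

definition irreducible_rep ::
  "('a::field \<Rightarrow> 'g::ab_group_add \<Rightarrow> 'g) \<Rightarrow> ('g \<Rightarrow> 'g \<Rightarrow> 'g) \<Rightarrow> nat \<Rightarrow> ('g \<Rightarrow> nat \<Rightarrow> nat \<Rightarrow> 'a) \<Rightarrow> bool" where
  "irreducible_rep scl br d \<rho> \<longleftrightarrow> lie_rep scl br d \<rho> \<and> d \<ge> 1 \<and>
     (\<forall>W. F_subspace W \<and> W \<subseteq> vec_space d \<and> (\<forall>x. \<forall>v\<in>W. mat_vec d (\<rho> x) v \<in> W)
          \<longrightarrow> W = {\<lambda>_. 0} \<or> W = vec_space d)"

text \<open>F^{d_0} (x) ... (x) F^{d_{r-1}} is realised as functions on index tuples
  (lists js with length r and js!i < d i), vanishing elsewhere.\<close>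

definition tidx :: "nat \<Rightarrow> (nat \<Rightarrow> nat) \<Rightarrow> nat list set" where
  "tidx r d = {js. length js = r \<and> (\<forall>i<r. js ! i < d i)}"

definition tensor_space :: "nat \<Rightarrow> (nat \<Rightarrow> nat) \<Rightarrow> (nat list \<Rightarrow> 'a::field) set" where
  "tensor_space r d = {c. \<forall>js. js \<notin> tidx r d \<longrightarrow> c js = 0}"

text \<open>Evaluation of t^k at b_i = (b i 0, ..., b i (N-1)).\<close>
definition eval_mono :: "nat \<Rightarrow> (nat \<Rightarrow> 'a::field) \<Rightarrow> (nat \<Rightarrow> int) \<Rightarrow> 'a" where
  "eval_mono N bi k = (\<Prod>j<N. bi j powi k j)"

text \<open>Action of x (x) t^k on V(lambda,b):
  sum_i (t^k)(b_i) * (1 (x) .. (x) rho_i(x) (x) .. (x) 1).\<close>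
definition tensor_act ::
  "nat \<Rightarrow> nat \<Rightarrow> (nat \<Rightarrow> nat) \<Rightarrow> (nat \<Rightarrow> 'g \<Rightarrow> nat \<Rightarrow> nat \<Rightarrow> 'a::field) \<Rightarrow> (nat \<Rightarrow> nat \<Rightarrow> 'a)
    \<Rightarrow> 'g \<Rightarrow> (nat \<Rightarrow> int) \<Rightarrow> (nat list \<Rightarrow> 'a) \<Rightarrow> (nat list \<Rightarrow> 'a)" where
  "tensor_act N r d \<rho> b x k c = (\<lambda>js. if js \<in> tidx r d then
      (\<Sum>i<r. eval_mono N (b i) k * (\<Sum>l<d i. \<rho> i x (js ! i) l * c (js[i := l])))
    else 0)"

text \<open>L-submodules: subspaces stable under all x (x) t^k with x in g_{bar k}
  (these span the multiloop algebra L).  Simplicity of V(lambda,b) as L-module.\<close>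
definition simple_multiloop_tensor_module ::
  "('a::field \<Rightarrow> 'g::ab_group_add \<Rightarrow> 'g) \<Rightarrow> nat \<Rightarrow> (nat \<Rightarrow> 'g \<Rightarrow> 'g) \<Rightarrow> (nat \<Rightarrow> 'a)
    \<Rightarrow> nat \<Rightarrow> (nat \<Rightarrow> nat) \<Rightarrow> (nat \<Rightarrow> 'g \<Rightarrow> nat \<Rightarrow> nat \<Rightarrow> 'a) \<Rightarrow> (nat \<Rightarrow> nat \<Rightarrow> 'a) \<Rightarrow> bool" where
  "simple_multiloop_tensor_module scl N \<sigma> \<xi> r d \<rho> b \<longleftrightarrow>
     (tensor_space r d :: (nat list \<Rightarrow> 'a) set) \<noteq> {\<lambda>_. 0} \<and>
     (\<forall>W. F_subspace W \<and> W \<subseteq> tensor_space r d \<and>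
          (\<forall>k. \<forall>x\<in>grade_space scl N \<sigma> \<xi> k. \<forall>c\<in>W. tensor_act N r d \<rho> b x k c \<in> W)
        \<longrightarrow> W = {\<lambda>_. 0} \<or> W = tensor_space r d)"

end

theory Submission
  imports Defs "Jordan_Normal_Form.Char_Poly"
begin

text \<open>
  (1) Separation of characters: because the points m(b_i) are pairwise distinct,
      suitable combinations of the operators of x (x) t^(k + m l), which act
      through the Laurent monomials (t^l)(m(b_i)), isolate each tensor factor:
      any L-submodule W is stable under x acting on a single factor i, for every
      homogeneous x in g_(bar k).
  (2) The joint eigenspaces g_(bar k) of the commuting finite-order automorphisms
      span g (via the eigenprojections built from roots of unity), so W is stable
      under every x in g acting on a single factor.
  (3) Burnside's theorem (proved here from Schur's lemma and Jacobson density over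
      the algebraically closed field F): the operators of g on the simple module
      V_(lambda_i) generate all matrices, so W is stable under every matrix unit
      acting on a single factor.
  (4) A nonzero subspace of a tensor product stable under all single-factor matrix
      units contains all basis tensors, hence is everything.
\<close>

lemma F_subspace_zero: "F_subspace W \<Longrightarrow> (\<lambda>_. 0) \<in> W"
  by (auto simp: F_subspace_def)

lemma F_subspace_add: "F_subspace W \<Longrightarrow> u \<in> W \<Longrightarrow> v \<in> W \<Longrightarrow> (\<lambda>i. u i + v i) \<in> W"
  by (auto simp: F_subspace_def)

lemma F_subspace_scale: "F_subspace W \<Longrightarrow> u \<in> W \<Longrightarrow> (\<lambda>i. c * u i) \<in> W"
  by (auto simp: F_subspace_def)

lemma F_subspace_diff:
  assumes "F_subspace W" "u \<in> W" "v \<in> W"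
  shows "(\<lambda>i. u i - v i) \<in> W"
proof -
  have "(\<lambda>i. u i + (-1) * v i) \<in> W"
    using assms F_subspace_add F_subspace_scale by blast
  then show ?thesis by simp
qed

lemma F_subspace_sum:
  assumes W: "F_subspace W" and f: "\<forall>a\<in>S. f a \<in> W"
  shows "(\<lambda>i. \<Sum>a\<in>S. f a i) \<in> W"
  using f
proof (induction S rule: infinite_finite_induct)
  case (insert x F)
  then show ?case using F_subspace_add[OF W, of "f x" "\<lambda>i. \<Sum>a\<in>F. f a i"] by simp
qed (use F_subspace_zero[OF W] in simp_all)

lemma F_subspace_unscale:
  assumes W: "F_subspace W" and c: "c \<noteq> 0" and cu: "(\<lambda>i. c * u i) \<in> W"
  shows "u \<in> W"
proof -
  have "(\<lambda>i. inverse c * (c * u i)) \<in> W" using F_subspace_scale[OF W cu] .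
  then show ?thesis using c by (simp add: mult.assoc[symmetric])
qed

lemma F_subspace_vec_space: "F_subspace (vec_space d)"
  by (simp add: F_subspace_def vec_space_def)

section \<open>Joint eigenspaces of commuting automorphisms of finite order\<close>

text \<open>For a linear map sigma with sigma^m = id and a primitive m-th root of unity xi,
  the eigenprojection onto the xi^t-eigenspace is (1/m) sum_s xi^(-st) sigma^s.\<close>
definition eigen_proj ::
  "('a::field \<Rightarrow> 'b::ab_group_add \<Rightarrow> 'b) \<Rightarrow> ('b \<Rightarrow> 'b) \<Rightarrow> 'a \<Rightarrow> nat \<Rightarrow> nat \<Rightarrow> 'b \<Rightarrow> 'b" where
  "eigen_proj scl \<sigma> \<xi> m t y = (\<Sum>s<m. scl ((inverse \<xi>) ^ (s * t) / of_nat m) ((\<sigma> ^^ s) y))"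

lemma root_of_unity_sum:
  assumes prim: "primitive_root (\<xi>::'a::field) m" and s: "0 < s" "s < m"
  shows "(\<Sum>t<m. (inverse \<xi>) ^ (s * t)) = 0"
proof -
  have m1: "\<xi> ^ m = 1" and ne: "\<xi> ^ s \<noteq> 1" using prim s by (auto simp: primitive_root_def)
  let ?q = "(inverse \<xi>) ^ s"
  have q1: "?q \<noteq> 1" using ne by (simp add: power_inverse)
  have "?q ^ m = (inverse (\<xi> ^ m)) ^ s"
    by (simp add: power_mult[symmetric] mult.commute power_inverse)
  then have qm: "?q ^ m = 1" using m1 by simp
  have "(\<Sum>t<m. (inverse \<xi>) ^ (s * t)) = (\<Sum>t<m. ?q ^ t)" by (simp add: power_mult)
  also have "\<dots> = 0" using q1 qm by (simp add: geometric_sum)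
  finally show ?thesis .
qed

context
  fixes scl :: "'a::field \<Rightarrow> 'b::ab_group_add \<Rightarrow> 'b" (infixr \<open>*s\<close> 75)
  assumes vs: "vector_space scl"
begin

interpretation V: vector_space scl by (rule vs)

lemma linear_funpow:
  assumes "Vector_Spaces.linear scl scl \<sigma>"
  shows "Vector_Spaces.linear scl scl (\<sigma> ^^ s)"
proof (induction s)
  case 0 show ?case using V.linear_id by (simp add: id_def)
next
  case (Suc s) show ?case using Vector_Spaces.linear_compose[OF Suc assms] by (simp add: comp_def)
qed

lemma eigen_proj_sum:
  assumes prim: "primitive_root (\<xi>::'a) m" and m0: "of_nat m \<noteq> (0::'a)"
  shows "(\<Sum>t<m. eigen_proj scl \<sigma> \<xi> m t y) = y"
proof -
  have m1: "m \<ge> 1" using prim by (auto simp: primitive_root_def)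
  have "(\<Sum>t<m. eigen_proj scl \<sigma> \<xi> m t y)
      = (\<Sum>s<m. (\<Sum>t<m. (inverse \<xi>) ^ (s * t) / of_nat m) *s (\<sigma> ^^ s) y)"
    unfolding eigen_proj_def V.scale_sum_left by (rule sum.swap)
  also have "\<dots> = (\<Sum>s\<in>{0}. (\<Sum>t<m. (inverse \<xi>) ^ (s * t) / of_nat m) *s (\<sigma> ^^ s) y)"
  proof (rule sum.mono_neutral_right)
    show "\<forall>s\<in>{..<m} - {0}. (\<Sum>t<m. inverse \<xi> ^ (s * t) / of_nat m) *s (\<sigma> ^^ s) y = 0"
      using root_of_unity_sum[OF prim] by (auto simp: sum_divide_distrib[symmetric])
  qed (use m1 in auto)
  also have "\<dots> = y" using m0 by simp
  finally show ?thesis .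
qed

lemma eigen_proj_eigenvector:
  assumes lin: "Vector_Spaces.linear scl scl \<sigma>" and ord: "\<sigma> ^^ m = id"
    and prim: "primitive_root (\<xi>::'a) m"
  shows "\<sigma> (eigen_proj scl \<sigma> \<xi> m t y) = \<xi> ^ t *s eigen_proj scl \<sigma> \<xi> m t y"
proof -
  interpret S: Vector_Spaces.linear scl scl \<sigma> by (rule lin)
  have m1: "\<xi> ^ m = 1" and mpos: "m \<ge> 1" using prim by (auto simp: primitive_root_def)
  have x0: "\<xi> \<noteq> 0" using m1 mpos by (auto simp: power_0_left)
  obtain m' where m': "m = Suc m'" using mpos by (cases m) auto
  define h where "h s = (\<xi> ^ t * (inverse \<xi>) ^ (s * t) / of_nat m) *s (\<sigma> ^^ s) y" for s
  define g where "g s = ((inverse \<xi>) ^ (s * t) / of_nat m) *s (\<sigma> ^^ Suc s) y" for s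
  have shift: "g s = h (Suc s)" for s
    unfolding g_def h_def using x0
    by (simp add: power_add mult.assoc power_mult_distrib[symmetric] field_simps)
  have wrap: "h (Suc m') = h 0"
  proof -
    have "(\<sigma> ^^ m) y = y" using ord by simp
    moreover have "(inverse \<xi>) ^ (m * t) = 1" by (simp add: power_mult power_inverse m1)
    ultimately show ?thesis unfolding h_def m'[symmetric] by simp
  qed
  have "\<sigma> (eigen_proj scl \<sigma> \<xi> m t y) = (\<Sum>s<m. g s)"
    unfolding eigen_proj_def S.sum g_def by (simp add: S.scale)
  also have "\<dots> = (\<Sum>s<m'. h (Suc s)) + h 0" by (simp add: m' shift wrap)
  also have "\<dots> = (\<Sum>s<m. h s)" unfolding m' sum.lessThan_Suc_shift by (simp add: add.commute)
  also have "\<dots> = \<xi> ^ t *s eigen_proj scl \<sigma> \<xi> m t y"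
    unfolding eigen_proj_def h_def V.scale_sum_right by (simp add: field_simps)
  finally show ?thesis .
qed

lemma funpow_commute: "f \<circ> g = g \<circ> f \<Longrightarrow> f ((g ^^ s) y) = (g ^^ s) (f y)"
  by (induction s) (simp_all add: fun_eq_iff)

lemma eigen_proj_commute:
  assumes lin: "Vector_Spaces.linear scl scl \<tau>" and comm: "\<tau> \<circ> \<sigma> = \<sigma> \<circ> \<tau>"
  shows "\<tau> (eigen_proj scl \<sigma> \<xi> m t y) = eigen_proj scl \<sigma> \<xi> m t (\<tau> y)"
proof -
  interpret T: Vector_Spaces.linear scl scl \<tau> by (rule lin)
  show ?thesis unfolding eigen_proj_def T.sum by (simp add: T.scale funpow_commute[OF comm])
qed

lemma eigen_proj_scale:
  assumes lin: "Vector_Spaces.linear scl scl \<sigma>"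
  shows "eigen_proj scl \<sigma> \<xi> m t (c *s y) = c *s eigen_proj scl \<sigma> \<xi> m t y"
proof -
  have "(\<sigma> ^^ s) (c *s y) = c *s (\<sigma> ^^ s) y" for s
    using linear_funpow[OF lin, of s] by (simp add: Vector_Spaces.linear_iff)
  then show ?thesis unfolding eigen_proj_def V.scale_sum_right by (simp add: mult.commute)
qed

text \<open>The joint eigenspaces g_(bar k) of N commuting automorphisms of finite order span g:
  by induction on the number of automorphisms, refining each joint eigenvector of the
  first n maps by the eigenprojections of the next one.\<close>
lemma grade_spaces_span:
  fixes \<sigma> :: "nat \<Rightarrow> 'b \<Rightarrow> 'b" and \<xi> :: "nat \<Rightarrow> 'a" and m :: "nat \<Rightarrow> nat"
  assumes lin: "\<forall>i<N. Vector_Spaces.linear scl scl (\<sigma> i)"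
    and ord: "\<forall>i<N. \<sigma> i ^^ m i = id"
    and prim: "\<forall>i<N. primitive_root (\<xi> i) (m i)"
    and comm: "\<forall>i<N. \<forall>j<N. \<sigma> i \<circ> \<sigma> j = \<sigma> j \<circ> \<sigma> i"
    and m0: "\<forall>i<N. of_nat (m i) \<noteq> (0::'a)"
  shows "V.span (\<Union>k. grade_space scl N \<sigma> \<xi> k) = UNIV"
proof -
  define G where "G n = (\<Union>k. {x. \<forall>i<n. \<sigma> i x = (\<xi> i powi k i) *s x})" for n
  have "n \<le> N \<Longrightarrow> V.span (G n) = UNIV" for n
  proof (induction n)
    case 0 then show ?case by (simp add: G_def)
  next
    case (Suc n)
    have nN: "n < N" using Suc by simp
    let ?P = "eigen_proj scl (\<sigma> n) (\<xi> n) (m n)"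
    have "G n \<subseteq> V.span (G (Suc n))"
    proof
      fix y assume "y \<in> G n"
      then obtain k where k: "\<forall>i<n. \<sigma> i y = (\<xi> i powi k i) *s y" by (auto simp: G_def)
      have eigen: "\<sigma> i (?P t y) = (\<xi> i powi (k(n := int t)) i) *s ?P t y" if i: "i < Suc n" for i t
      proof (cases "i = n")
        case True
        then show ?thesis using eigen_proj_eigenvector[of "\<sigma> n" "m n" "\<xi> n" t y] lin ord prim nN
          by (simp add: power_int_of_nat)
      next
        case False
        then have il: "i < n" using i by simp
        have "\<sigma> i (?P t y) = ?P t (\<sigma> i y)"
          by (rule eigen_proj_commute) (use lin comm il nN in auto)
        also have "\<dots> = (\<xi> i powi k i) *s ?P t y"
          using k il eigen_proj_scale[of "\<sigma> n"] lin nN by simp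
        finally show ?thesis using False by simp
      qed
      then have "?P t y \<in> G (Suc n)" for t unfolding G_def by blast
      then have "(\<Sum>t<m n. ?P t y) \<in> V.span (G (Suc n))"
        by (intro V.span_sum) (use V.span_base in blast)
      then show "y \<in> V.span (G (Suc n))"
        using eigen_proj_sum[of "\<xi> n" "m n"] prim m0 nN by simp
    qed
    then have "V.span (G n) \<subseteq> V.span (G (Suc n))"
      using V.span_minimal V.subspace_span by blast
    then show ?case using Suc by auto
  qed
  then show ?thesis unfolding G_def grade_space_def by simp
qed

end

section \<open>Separation of distinct characters\<close>

lemma eval_mono_step:
  fixes z :: "nat \<Rightarrow> 'a::field"
  assumes j: "j < N" and z: "\<forall>j<N. z j \<noteq> 0"
  shows "eval_mono N z (l(j := l j + 1)) = z j * eval_mono N z l"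
proof -
  have f: "finite {..<N}" and jN: "j \<in> {..<N}" using j by auto
  have rest: "(\<Prod>j'\<in>{..<N} - {j}. z j' powi (l(j := l j + 1)) j') = (\<Prod>j'\<in>{..<N} - {j}. z j' powi l j')"
    by (rule prod.cong) auto
  have "z j powi (l j + 1) = z j * z j powi l j" using j z by (simp add: power_int_add_1')
  then show ?thesis
    unfolding eval_mono_def prod.remove[OF f jN] rest by simp
qed

text \<open>Induction on the
  index set: a difference of two consecutive combinations eliminates one point.\<close>
lemma separate_characters:
  fixes W :: "('b \<Rightarrow> 'a::field) set" and z :: "nat \<Rightarrow> nat \<Rightarrow> 'a"
  assumes "finite S" and W: "F_subspace W"
    and "\<forall>l. \<forall>c\<in>W. (\<lambda>js. \<Sum>i\<in>S. eval_mono N (z i) l * A i c js) \<in> W"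
    and "\<forall>i\<in>S. \<forall>j<N. z i j \<noteq> 0"
    and "\<forall>i\<in>S. \<forall>i'\<in>S. i \<noteq> i' \<longrightarrow> (\<exists>j<N. z i j \<noteq> z i' j)"
  shows "\<forall>i\<in>S. \<forall>c\<in>W. A i c \<in> W"
  using assms(1,3-5)
proof (induction S arbitrary: A rule: finite_induct)
  case empty then show ?case by simp
next
  case (insert a S)
  define T where "T l c = (\<lambda>js. \<Sum>i\<in>insert a S. eval_mono N (z i) l * A i c js)" for l c
  have T: "\<forall>l. \<forall>c\<in>W. T l c \<in> W" using insert.prems(1) unfolding T_def by blast
  have rest: "\<forall>i\<in>S. \<forall>c\<in>W. A i c \<in> W"
  proof (intro ballI)
    fix i0 c assume i0: "i0 \<in> S" and c: "c \<in> W"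
    have "i0 \<noteq> a" using i0 insert.hyps by auto
    then obtain j where j: "j < N" and ne: "z i0 j \<noteq> z a j" using insert.prems(3) i0 by blast
    define A' where "A' i c = (\<lambda>js. (z i j - z a j) * A i c js)" for i c
    have elim: "(\<lambda>js. \<Sum>i\<in>S. eval_mono N (z i) l * A' i c js)
              = (\<lambda>js. T (l(j := l j + 1)) c js - z a j * T l c js)" for l c
    proof
      fix js
      have "T (l(j := l j + 1)) c js - z a j * T l c js
          = (\<Sum>i\<in>insert a S. (z i j - z a j) * eval_mono N (z i) l * A i c js)"
        unfolding T_def sum_distrib_left sum_subtractf[symmetric]
      proof (intro sum.cong refl)
        fix i assume i: "i \<in> insert a S"
        have "eval_mono N (z i) (l(j := l j + 1)) = z i j * eval_mono N (z i) l"
          using eval_mono_step[OF j] insert.prems(2) i by blast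
        then show "eval_mono N (z i) (l(j := l j + 1)) * A i c js - z a j * (eval_mono N (z i) l * A i c js)
            = (z i j - z a j) * eval_mono N (z i) l * A i c js" by (simp add: algebra_simps)
      qed
      also have "\<dots> = (\<Sum>i\<in>S. (z i j - z a j) * eval_mono N (z i) l * A i c js)"
        using insert.hyps by simp
      finally show "(\<Sum>i\<in>S. eval_mono N (z i) l * A' i c js) = T (l(j := l j + 1)) c js - z a j * T l c js"
        unfolding A'_def by (simp add: algebra_simps)
    qed
    have "\<forall>l. \<forall>c\<in>W. (\<lambda>js. \<Sum>i\<in>S. eval_mono N (z i) l * A' i c js) \<in> W"
      unfolding elim using F_subspace_diff[OF W] F_subspace_scale[OF W] T by blast
    then have "\<forall>i\<in>S. \<forall>c\<in>W. A' i c \<in> W"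
      using insert.IH insert.prems by blast
    then show "A i0 c \<in> W"
      using F_subspace_unscale[OF W, of "z i0 j - z a j"] ne i0 c unfolding A'_def by simp
  qed
  have "\<forall>c\<in>W. A a c \<in> W"
  proof
    fix c assume c: "c \<in> W"
    have "(\<lambda>js. T (\<lambda>_. 0) c js - (\<Sum>i\<in>S. A i c js)) \<in> W"
      using F_subspace_diff[OF W] T c F_subspace_sum[OF W, of S "\<lambda>i. A i c"] rest by blast
    moreover have "(\<lambda>js. T (\<lambda>_. 0) c js - (\<Sum>i\<in>S. A i c js)) = A a c"
      unfolding T_def using insert.hyps by (simp add: fun_eq_iff eval_mono_def)
    ultimately show "A a c \<in> W" by simp
  qed
  then show ?case using rest by blast
qed

text \<open>d x d matrices are functions nat -> nat -> F (only entries below d matter);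
  product, identity, standard basis vectors and matrix units.\<close>
definition mat_mult :: "nat \<Rightarrow> (nat \<Rightarrow> nat \<Rightarrow> 'a::field) \<Rightarrow> (nat \<Rightarrow> nat \<Rightarrow> 'a) \<Rightarrow> (nat \<Rightarrow> nat \<Rightarrow> 'a)" where
  "mat_mult d M M' = (\<lambda>p q. \<Sum>l<d. M p l * M' l q)"

definition id_mat :: "nat \<Rightarrow> nat \<Rightarrow> 'a::field" where
  "id_mat = (\<lambda>p q. if p = q then 1 else 0)"

definition basis_vec :: "nat \<Rightarrow> nat \<Rightarrow> 'a::field" where
  "basis_vec q = (\<lambda>p. if p = q then 1 else 0)"

definition mat_unit :: "nat \<Rightarrow> nat \<Rightarrow> nat \<Rightarrow> nat \<Rightarrow> 'a::field" where
  "mat_unit p q = (\<lambda>p' q'. if p' = p \<and> q' = q then 1 else 0)"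

lemma mat_vec_mult: "mat_vec d (mat_mult d M M') v = mat_vec d M (mat_vec d M' v)"
proof
  fix p show "mat_vec d (mat_mult d M M') v p = mat_vec d M (mat_vec d M' v) p"
  proof (cases "p < d")
    case True
    have "(\<Sum>q<d. (\<Sum>l<d. M p l * M' l q) * v q) = (\<Sum>l<d. M p l * (\<Sum>q<d. M' l q * v q))"
      by (simp add: sum_distrib_left sum_distrib_right mult.assoc) (rule sum.swap)
    also have "\<dots> = (\<Sum>l<d. M p l * mat_vec d M' v l)"
      by (rule sum.cong) (auto simp: mat_vec_def)
    finally show ?thesis using True by (simp add: mat_vec_def mat_mult_def)
  qed (simp add: mat_vec_def)
qed

lemma mat_vec_add_mat: "mat_vec d (\<lambda>p q. M p q + M' p q) v = (\<lambda>p. mat_vec d M v p + mat_vec d M' v p)"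
  by (auto simp: mat_vec_def fun_eq_iff distrib_right sum.distrib)

lemma mat_vec_scale_mat: "mat_vec d (\<lambda>p q. c * M p q) v = (\<lambda>p. c * mat_vec d M v p)"
  by (auto simp: mat_vec_def fun_eq_iff sum_distrib_left mult.assoc)

lemma mat_vec_diff_mat: "mat_vec d (\<lambda>p q. M p q - M' p q) v = (\<lambda>p. mat_vec d M v p - mat_vec d M' v p)"
  by (auto simp: mat_vec_def fun_eq_iff left_diff_distrib sum_subtractf)

lemma mat_vec_sum_mat: "mat_vec d (\<lambda>p q. \<Sum>i\<in>S. B i p q) v = (\<lambda>p. \<Sum>i\<in>S. mat_vec d (B i) v p)"
  by (auto simp: mat_vec_def fun_eq_iff sum_distrib_right intro: sum.swap)

lemma mat_vec_scale_vec: "mat_vec d M (\<lambda>i. c * u i) = (\<lambda>p. c * mat_vec d M u p)"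
  by (auto simp: mat_vec_def fun_eq_iff sum_distrib_left mult.left_commute)

lemma mat_vec_zero_vec: "mat_vec d M (\<lambda>_. 0) = (\<lambda>_. 0)"
  by (auto simp: mat_vec_def fun_eq_iff)

lemma mat_vec_zero_mat: "mat_vec d (\<lambda>p q. 0) v = (\<lambda>_. 0)"
  by (auto simp: mat_vec_def fun_eq_iff)

lemma mat_vec_in: "mat_vec d M v \<in> vec_space d"
  by (auto simp: mat_vec_def vec_space_def)

lemma mat_vec_id: "v \<in> vec_space d \<Longrightarrow> mat_vec d id_mat v = v"
  by (auto simp: mat_vec_def id_mat_def vec_space_def fun_eq_iff
      if_distrib[of "\<lambda>x. x * _"] sum.delta cong: if_cong)

lemma mat_vec_basis: "q < d \<Longrightarrow> mat_vec d M (basis_vec q) = (\<lambda>p. if p < d then M p q else 0)"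
  by (auto simp: mat_vec_def basis_vec_def fun_eq_iff if_distrib[of "\<lambda>x. _ * x"] sum.delta' cong: if_cong)

lemma basis_vec_in: "q < d \<Longrightarrow> basis_vec q \<in> vec_space d"
  by (simp add: basis_vec_def vec_space_def)

lemma vec_expansion: "x \<in> vec_space d \<Longrightarrow> x = (\<lambda>p. \<Sum>q<d. x q * basis_vec q p)"
  by (auto simp: vec_space_def basis_vec_def fun_eq_iff if_distrib[of "\<lambda>y. _ * y"] sum.delta' cong: if_cong)

lemma linear_map_is_mat_vec:
  fixes f :: "(nat \<Rightarrow> 'a::field) \<Rightarrow> (nat \<Rightarrow> 'a)"
  assumes add: "\<forall>x\<in>vec_space d. \<forall>y\<in>vec_space d. f (\<lambda>i. x i + y i) = (\<lambda>i. f x i + f y i)"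
    and sc: "\<forall>c. \<forall>x\<in>vec_space d. f (\<lambda>i. c * x i) = (\<lambda>i. c * f x i)"
    and into: "\<forall>x\<in>vec_space d. f x \<in> vec_space d"
    and x: "x \<in> vec_space d"
  shows "f x = mat_vec d (\<lambda>p q. f (basis_vec q) p) x"
proof -
  have partial: "S \<subseteq> {..<d} \<Longrightarrow>
      f (\<lambda>p. \<Sum>q\<in>S. x q * basis_vec q p) = (\<lambda>p. \<Sum>q\<in>S. x q * f (basis_vec q) p)" for S
  proof (induction S rule: infinite_finite_induct)
    case (infinite S) then show ?case using finite_subset by blast
  next
    case empty
    have "(\<lambda>_. 0::'a) \<in> vec_space d" by (simp add: vec_space_def)
    then show ?case using sc[rule_format, of "\<lambda>_. 0" 0] by simp
  next
    case (insert q F)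
    have q: "q < d" and F: "F \<subseteq> {..<d}" using insert by auto
    have in1: "(\<lambda>p. x q * basis_vec q p) \<in> vec_space d" using q by (simp add: vec_space_def basis_vec_def)
    have in2: "(\<lambda>p. \<Sum>q\<in>F. x q * basis_vec q p) \<in> vec_space d"
      using F by (auto simp: vec_space_def basis_vec_def intro!: sum.neutral)
    have "f (\<lambda>p. \<Sum>q\<in>insert q F. x q * basis_vec q p)
        = (\<lambda>i. f (\<lambda>p. x q * basis_vec q p) i + f (\<lambda>p. \<Sum>q\<in>F. x q * basis_vec q p) i)"
      using insert add[rule_format, OF in1 in2] by simp
    also have "f (\<lambda>p. x q * basis_vec q p) = (\<lambda>i. x q * f (basis_vec q) i)"
      using sc[rule_format, OF basis_vec_in[OF q]] by simp
    finally show ?case using insert F by simp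
  qed
  have col_in: "f (basis_vec q) \<in> vec_space d" if "q < d" for q
    using into basis_vec_in[OF that] by blast
  have "f x = (\<lambda>p. \<Sum>q<d. x q * f (basis_vec q) p)"
    using vec_expansion[OF x] partial[of "{..<d}"] by simp
  also have "\<dots> = mat_vec d (\<lambda>p q. f (basis_vec q) p) x"
    using col_in by (auto simp: mat_vec_def vec_space_def fun_eq_iff mult.commute)
  finally show ?thesis .
qed

lemma eigenvector_exists:
  fixes T :: "nat \<Rightarrow> nat \<Rightarrow> 'a::field"
  assumes alg: "alg_closed TYPE('a)" and d: "d \<ge> 1"
  shows "\<exists>lam u. u \<in> vec_space d \<and> u \<noteq> (\<lambda>_. 0) \<and> mat_vec d T u = (\<lambda>p. lam * u p)"
proof -
  define A where "A = mat d d (\<lambda>(i, j). T i j)"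
  have A: "A \<in> carrier_mat d d" by (simp add: A_def)
  have "degree (char_poly A) = d" using degree_monic_char_poly[OF A] by simp
  then obtain lam where "poly (char_poly A) lam = 0" using alg d unfolding alg_closed_def by auto
  then have "eigenvalue A lam" using eigenvalue_root_char_poly[OF A] by simp
  then obtain v where v: "v \<in> carrier_vec d" "v \<noteq> 0\<^sub>v d" "A *\<^sub>v v = lam \<cdot>\<^sub>v v"
    unfolding eigenvalue_def eigenvector_def using A by auto
  define u where "u p = (if p < d then v $ p else 0)" for p
  have "u \<in> vec_space d" by (simp add: u_def vec_space_def)
  moreover have "u \<noteq> (\<lambda>_. 0)"
  proof
    assume "u = (\<lambda>_. 0)"
    then have "v = 0\<^sub>v d" using v(1) by (auto simp: u_def fun_eq_iff vec_eq_iff) metis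
    with v(2) show False by simp
  qed
  moreover have "mat_vec d T u = (\<lambda>p. lam * u p)"
  proof
    fix p
    show "mat_vec d T u p = lam * u p"
    proof (cases "p < d")
      case True
      have "(A *\<^sub>v v) $ p = (\<Sum>q<d. T p q * u q)"
        using True A v(1) by (simp add: A_def scalar_prod_def u_def atLeast0LessThan)
      then show ?thesis using v(3) True v(1) by (simp add: mat_vec_def u_def)
    qed (simp add: mat_vec_def u_def)
  qed
  ultimately show ?thesis by blast
qed

section \<open>Burnside's theorem\<close>

text \<open>Burnside's theorem says A contains every matrix; we derive it from
  Schur's lemma and the Jacobson density theorem.\<close>
locale irreducible_matrix_algebra =
  fixes d :: nat and A :: "(nat \<Rightarrow> nat \<Rightarrow> 'a::field) set"
  assumes alg: "alg_closed TYPE('a)" and dim_pos: "d \<ge> 1"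
    and add_closed: "\<And>M M'. M \<in> A \<Longrightarrow> M' \<in> A \<Longrightarrow> (\<lambda>p q. M p q + M' p q) \<in> A"
    and scale_closed: "\<And>M c. M \<in> A \<Longrightarrow> (\<lambda>p q. c * M p q) \<in> A"
    and mult_closed: "\<And>M M'. M \<in> A \<Longrightarrow> M' \<in> A \<Longrightarrow> mat_mult d M M' \<in> A"
    and id_in: "id_mat \<in> A"
    and irreducible: "\<And>U. F_subspace U \<Longrightarrow> U \<subseteq> vec_space d \<Longrightarrow>
       (\<forall>M\<in>A. \<forall>v\<in>U. mat_vec d M v \<in> U) \<Longrightarrow> U = {\<lambda>_. 0} \<or> U = vec_space d"
begin

lemma diff_closed: "M \<in> A \<Longrightarrow> M' \<in> A \<Longrightarrow> (\<lambda>p q. M p q - M' p q) \<in> A"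
  using add_closed[of M "\<lambda>p q. (-1) * M' p q"] scale_closed[of M' "-1"] by simp

lemma zero_in: "(\<lambda>p q. 0) \<in> A"
  using scale_closed[OF id_in, of 0] by simp

lemma sum_closed: "\<forall>i\<in>S. B i \<in> A \<Longrightarrow> (\<lambda>p q. \<Sum>i\<in>S. B i p q) \<in> A"
proof (induction S rule: infinite_finite_induct)
  case (insert x F)
  then show ?case using add_closed[of "B x" "\<lambda>p q. \<Sum>i\<in>F. B i p q"] by simp
qed (simp_all add: zero_in)

text \<open>Schur's lemma: every linear endomorphism of F^d commuting with A is a scalar
  (its eigenspace for some eigenvalue is a nonzero A-stable subspace).\<close>
lemma schur:
  fixes f :: "(nat \<Rightarrow> 'a) \<Rightarrow> (nat \<Rightarrow> 'a)"
  assumes add: "\<forall>x\<in>vec_space d. \<forall>y\<in>vec_space d. f (\<lambda>i. x i + y i) = (\<lambda>i. f x i + f y i)"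
    and sc: "\<forall>c. \<forall>x\<in>vec_space d. f (\<lambda>i. c * x i) = (\<lambda>i. c * f x i)"
    and into: "\<forall>x\<in>vec_space d. f x \<in> vec_space d"
    and comm: "\<forall>M\<in>A. \<forall>x\<in>vec_space d. f (mat_vec d M x) = mat_vec d M (f x)"
  shows "\<exists>lam. \<forall>x\<in>vec_space d. f x = (\<lambda>p. lam * x p)"
proof -
  define T where "T = (\<lambda>p q. f (basis_vec q) p)"
  have fT: "f x = mat_vec d T x" if "x \<in> vec_space d" for x
    unfolding T_def by (rule linear_map_is_mat_vec[OF add sc into that])
  obtain lam u where u: "u \<in> vec_space d" "u \<noteq> (\<lambda>_. 0)" "mat_vec d T u = (\<lambda>p. lam * u p)"
    using eigenvector_exists[OF alg dim_pos] by blast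
  define U where "U = {x \<in> vec_space d. f x = (\<lambda>p. lam * x p)}"
  have z: "(\<lambda>_. 0::'a) \<in> vec_space d" by (simp add: vec_space_def)
  have "F_subspace U"
  proof -
    have "(\<lambda>_. 0) \<in> U" using z sc[rule_format, OF z, of 0] by (simp add: U_def)
    moreover have "\<forall>v\<in>U. \<forall>w\<in>U. (\<lambda>i. v i + w i) \<in> U"
      using add F_subspace_vec_space[of d] by (auto simp: U_def F_subspace_def distrib_left)
    moreover have "\<forall>c. \<forall>v\<in>U. (\<lambda>i. c * v i) \<in> U"
      using sc F_subspace_vec_space[of d] by (auto simp: U_def F_subspace_def mult.left_commute)
    ultimately show ?thesis by (simp add: F_subspace_def)
  qed
  moreover have "U \<subseteq> vec_space d" by (auto simp: U_def)
  moreover have "\<forall>M\<in>A. \<forall>v\<in>U. mat_vec d M v \<in> U"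
    using comm by (auto simp: U_def mat_vec_in mat_vec_scale_vec)
  moreover have "u \<in> U" using u fT by (simp add: U_def)
  ultimately have "U = vec_space d" using irreducible u(2) by blast
  then show ?thesis unfolding U_def by blast
qed

definition matches :: "nat \<Rightarrow> (nat \<Rightarrow> nat \<Rightarrow> 'a) \<Rightarrow> (nat \<Rightarrow> nat \<Rightarrow> 'a) \<Rightarrow> bool" where
  "matches n w M \<longleftrightarrow> M \<in> A \<and> (\<forall>j<n. mat_vec d M (basis_vec j) = w j)"

definition interpolates :: "nat \<Rightarrow> bool" where
  "interpolates n \<longleftrightarrow> (\<forall>w. (\<forall>i<n. w i \<in> vec_space d) \<longrightarrow> (\<exists>M. matches n w M))"

definition single :: "nat \<Rightarrow> (nat \<Rightarrow> 'a) \<Rightarrow> nat \<Rightarrow> nat \<Rightarrow> 'a" where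
  "single i x = (\<lambda>j. if j = i then x else (\<lambda>_. 0))"

text \<open>If every element of A killing e_0, ..., e_(n-1) also kills e_n, the image of e_n
  under an element of A sending e_i to x and e_j (j \<noteq> i) to 0 depends only on x.\<close>
definition transfer :: "nat \<Rightarrow> nat \<Rightarrow> (nat \<Rightarrow> 'a) \<Rightarrow> (nat \<Rightarrow> 'a)" where
  "transfer n i x = mat_vec d (SOME M. matches n (single i x) M) (basis_vec n)"

lemma matches_single_exists:
  assumes "interpolates n" "x \<in> vec_space d"
  shows "\<exists>M. matches n (single i x) M"
  using assms unfolding interpolates_def single_def by (auto simp: vec_space_def)

lemma transfer_eq:
  assumes interp: "interpolates n"
    and no_kernel: "\<forall>M. matches n (\<lambda>_ _. 0) M \<longrightarrow> mat_vec d M (basis_vec n) = (\<lambda>_. 0)"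
    and x: "x \<in> vec_space d" and M: "matches n (single i x) M"
  shows "transfer n i x = mat_vec d M (basis_vec n)"
proof -
  have unique: "mat_vec d M (basis_vec n) = mat_vec d M' (basis_vec n)"
    if "matches n w M" "matches n w M'" for w M M'
  proof -
    have "matches n (\<lambda>_ _. 0) (\<lambda>p q. M p q - M' p q)"
      using that diff_closed by (simp add: matches_def mat_vec_diff_mat)
    then have "mat_vec d (\<lambda>p q. M p q - M' p q) (basis_vec n) = (\<lambda>_. 0)" using no_kernel by blast
    then show ?thesis by (simp add: mat_vec_diff_mat fun_eq_iff)
  qed
  show ?thesis unfolding transfer_def
    by (rule unique[OF someI_ex[OF matches_single_exists[OF interp x]] M])
qed

text \<open>Under the same hypothesis each transfer map is an A-equivariant linear map,
  hence a scalar by Schur's lemma.\<close>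
lemma transfer_scalar:
  assumes interp: "interpolates n"
    and no_kernel: "\<forall>M. matches n (\<lambda>_ _. 0) M \<longrightarrow> mat_vec d M (basis_vec n) = (\<lambda>_. 0)"
  shows "\<exists>lam. \<forall>x\<in>vec_space d. transfer n i x = (\<lambda>p. lam * x p)"
proof (rule schur)
  note ex = matches_single_exists[OF interp]
  note teq = transfer_eq[OF interp no_kernel]
  show "\<forall>x\<in>vec_space d. \<forall>y\<in>vec_space d.
      transfer n i (\<lambda>j. x j + y j) = (\<lambda>j. transfer n i x j + transfer n i y j)"
  proof (intro ballI)
    fix x y :: "nat \<Rightarrow> 'a" assume x: "x \<in> vec_space d" and y: "y \<in> vec_space d"
    obtain Mx My where Mx: "matches n (single i x) Mx" and My: "matches n (single i y) My"
      using ex x y by blast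
    have "matches n (single i (\<lambda>j. x j + y j)) (\<lambda>p q. Mx p q + My p q)"
      using Mx My add_closed by (auto simp: matches_def single_def mat_vec_add_mat)
    then show "transfer n i (\<lambda>j. x j + y j) = (\<lambda>j. transfer n i x j + transfer n i y j)"
      using teq Mx My x y F_subspace_add[OF F_subspace_vec_space x y] by (simp add: mat_vec_add_mat)
  qed
  show "\<forall>c. \<forall>x\<in>vec_space d. transfer n i (\<lambda>j. c * x j) = (\<lambda>j. c * transfer n i x j)"
  proof (intro allI ballI)
    fix c and x :: "nat \<Rightarrow> 'a" assume x: "x \<in> vec_space d"
    obtain Mx where Mx: "matches n (single i x) Mx" using ex x by blast
    have "matches n (single i (\<lambda>j. c * x j)) (\<lambda>p q. c * Mx p q)"
      using Mx scale_closed by (auto simp: matches_def single_def mat_vec_scale_mat)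
    then show "transfer n i (\<lambda>j. c * x j) = (\<lambda>j. c * transfer n i x j)"
      using teq Mx x F_subspace_scale[OF F_subspace_vec_space x] by (simp add: mat_vec_scale_mat)
  qed
  show "\<forall>x\<in>vec_space d. transfer n i x \<in> vec_space d" by (simp add: transfer_def mat_vec_in)
  show "\<forall>M\<in>A. \<forall>x\<in>vec_space d. transfer n i (mat_vec d M x) = mat_vec d M (transfer n i x)"
  proof (intro ballI)
    fix M and x :: "nat \<Rightarrow> 'a" assume M: "M \<in> A" and x: "x \<in> vec_space d"
    obtain Mx where Mx: "matches n (single i x) Mx" using ex x by blast
    have "matches n (single i (mat_vec d M x)) (mat_mult d M Mx)"
      using Mx M mult_closed by (auto simp: matches_def single_def mat_vec_mult mat_vec_zero_vec)
    then show "transfer n i (mat_vec d M x) = mat_vec d M (transfer n i x)"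
      using teq[OF mat_vec_in] teq[OF x Mx] by (simp add: mat_vec_mult)
  qed
qed

text \<open>Otherwise
  the transfer maps are scalars lam_i, and id - sum_i M_i (M_i sending e_i to e_i and the
  other e_j to 0) kills e_0, ..., e_(n-1) but sends e_n to e_n - sum_i lam_i e_i.\<close>
lemma density_step:
  assumes interp: "interpolates n" and nd: "n < d"
  shows "\<exists>M. matches n (\<lambda>_ _. 0) M \<and> mat_vec d M (basis_vec n) \<noteq> (\<lambda>_. 0)"
proof (rule ccontr)
  assume "\<not> ?thesis"
  then have no_kernel: "\<forall>M. matches n (\<lambda>_ _. 0) M \<longrightarrow> mat_vec d M (basis_vec n) = (\<lambda>_. 0)" by blast
  obtain lam where lam: "\<forall>i. \<forall>x\<in>vec_space d. transfer n i x = (\<lambda>p. lam i * x p)"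
    using transfer_scalar[OF interp no_kernel] by metis
  define Mi where "Mi i = (SOME M. matches n (single i (basis_vec i)) M)" for i
  have Mi: "matches n (single i (basis_vec i)) (Mi i)" if "i < n" for i
    unfolding Mi_def by (rule someI_ex[OF matches_single_exists[OF interp]]) (use that nd in \<open>simp add: basis_vec_in\<close>)
  define M0 where "M0 = (\<lambda>p q. id_mat p q - (\<Sum>i<n. Mi i p q))"
  have M0_on: "mat_vec d M0 (basis_vec j) = (\<lambda>p. basis_vec j p - (\<Sum>i<n. mat_vec d (Mi i) (basis_vec j) p))"
    if "j \<le> n" for j
  proof -
    have I: "mat_vec d id_mat (basis_vec j) = basis_vec j" using that nd by (simp add: mat_vec_id basis_vec_in)
    show ?thesis unfolding M0_def mat_vec_diff_mat mat_vec_sum_mat I by (rule refl)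
  qed
  have "matches n (\<lambda>_ _. 0) M0"
  proof -
    have "M0 \<in> A" unfolding M0_def
      by (rule diff_closed[OF id_in sum_closed]) (use Mi in \<open>auto simp: matches_def\<close>)
    moreover have "mat_vec d M0 (basis_vec j) = (\<lambda>_. 0)" if j: "j < n" for j
    proof -
      have "(\<Sum>i<n. mat_vec d (Mi i) (basis_vec j) p) = (\<Sum>i<n. if i = j then basis_vec j p else 0)" for p
        using Mi j by (intro sum.cong) (auto simp: matches_def single_def)
      then show ?thesis using M0_on j by (simp add: fun_eq_iff)
    qed
    ultimately show ?thesis by (simp add: matches_def)
  qed
  then have "mat_vec d M0 (basis_vec n) n = 0" using no_kernel by simp
  moreover have "mat_vec d (Mi i) (basis_vec n) = (\<lambda>p. lam i * basis_vec i p)" if "i < n" for i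
    using transfer_eq[OF interp no_kernel basis_vec_in Mi[OF that]] lam that nd
    by (simp add: basis_vec_in)
  then have "mat_vec d M0 (basis_vec n) n = 1"
    using M0_on[of n] by (simp add: basis_vec_def)
  ultimately show False by simp
qed

text \<open>If some element of A kills e_0, ..., e_(n-1) but not e_n, then the images of e_n
  under such elements form a nonzero A-stable subspace, hence all of F^d.\<close>
lemma kernel_images_full:
  assumes M1: "matches n (\<lambda>_ _. 0) M1" "mat_vec d M1 (basis_vec n) \<noteq> (\<lambda>_. 0)"
  shows "{mat_vec d M (basis_vec n) | M. matches n (\<lambda>_ _. 0) M} = vec_space d"
    (is "?U = _")
proof -
  have "F_subspace ?U"
    unfolding F_subspace_def
  proof (intro conjI ballI allI)
    have "matches n (\<lambda>_ _. 0) (\<lambda>p q. 0)" using zero_in by (simp add: matches_def mat_vec_zero_mat)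
    moreover have "(\<lambda>_. 0) = mat_vec d (\<lambda>p q. 0) (basis_vec n)" by (simp add: mat_vec_zero_mat)
    ultimately show "(\<lambda>_. 0) \<in> ?U" by blast
  next
    fix v w assume "v \<in> ?U" "w \<in> ?U"
    then obtain Mv Mw where "matches n (\<lambda>_ _. 0) Mv" "v = mat_vec d Mv (basis_vec n)"
      "matches n (\<lambda>_ _. 0) Mw" "w = mat_vec d Mw (basis_vec n)" by blast
    then have "matches n (\<lambda>_ _. 0) (\<lambda>p q. Mv p q + Mw p q)"
      "(\<lambda>i. v i + w i) = mat_vec d (\<lambda>p q. Mv p q + Mw p q) (basis_vec n)"
      using add_closed by (simp_all add: matches_def mat_vec_add_mat)
    then show "(\<lambda>i. v i + w i) \<in> ?U" by blast
  next
    fix c v assume "v \<in> ?U"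
    then obtain Mv where "matches n (\<lambda>_ _. 0) Mv" "v = mat_vec d Mv (basis_vec n)" by blast
    then have "matches n (\<lambda>_ _. 0) (\<lambda>p q. c * Mv p q)"
      "(\<lambda>i. c * v i) = mat_vec d (\<lambda>p q. c * Mv p q) (basis_vec n)"
      using scale_closed by (simp_all add: matches_def mat_vec_scale_mat)
    then show "(\<lambda>i. c * v i) \<in> ?U" by blast
  qed
  moreover have "?U \<subseteq> vec_space d" by (auto simp: mat_vec_in)
  moreover have "\<forall>M\<in>A. \<forall>v\<in>?U. mat_vec d M v \<in> ?U"
  proof (intro ballI)
    fix M v assume M: "M \<in> A" and "v \<in> ?U"
    then obtain Mv where "matches n (\<lambda>_ _. 0) Mv" "v = mat_vec d Mv (basis_vec n)" by blast
    then have "matches n (\<lambda>_ _. 0) (mat_mult d M Mv)"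
      "mat_vec d M v = mat_vec d (mat_mult d M Mv) (basis_vec n)"
      using M mult_closed by (simp_all add: matches_def mat_vec_mult mat_vec_zero_vec)
    then show "mat_vec d M v \<in> ?U" by blast
  qed
  moreover have "mat_vec d M1 (basis_vec n) \<in> ?U" using M1 by blast
  ultimately show ?thesis using irreducible M1(2) by blast
qed

lemma interpolates_Suc:
  assumes interp: "interpolates n" and nd: "n < d"
  shows "interpolates (Suc n)"
  unfolding interpolates_def
proof (intro allI impI)
  fix w :: "nat \<Rightarrow> nat \<Rightarrow> 'a" assume w: "\<forall>i<Suc n. w i \<in> vec_space d"
  have "\<forall>i<n. w i \<in> vec_space d" using w by simp
  then obtain M' where M': "matches n w M'" using interp unfolding interpolates_def by blast
  obtain M1 where M1: "matches n (\<lambda>_ _. 0) M1" "mat_vec d M1 (basis_vec n) \<noteq> (\<lambda>_. 0)"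
    using density_step[OF interp nd] by blast
  have "(\<lambda>p. w n p - mat_vec d M' (basis_vec n) p) \<in> vec_space d"
    by (rule F_subspace_diff[OF F_subspace_vec_space]) (use w mat_vec_in in auto)
  then obtain M'' where M'': "matches n (\<lambda>_ _. 0) M''"
      "(\<lambda>p. w n p - mat_vec d M' (basis_vec n) p) = mat_vec d M'' (basis_vec n)"
    using kernel_images_full[OF M1] by blast
  have "matches (Suc n) w (\<lambda>p q. M' p q + M'' p q)"
    using M' M''(1) M''(2)[symmetric] add_closed by (auto simp: matches_def mat_vec_add_mat less_Suc_eq)
  then show "\<exists>M. matches (Suc n) w M" by blast
qed

lemma density: "n \<le> d \<Longrightarrow> interpolates n"
proof (induction n)
  case 0 show ?case using id_in by (auto simp: interpolates_def matches_def)
next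
  case (Suc n) then show ?case using interpolates_Suc by simp
qed

lemma burnside:
  assumes p: "p < d" and q: "q < d"
  shows "\<exists>M\<in>A. \<forall>p'<d. \<forall>q'<d. M p' q' = mat_unit p q p' q'"
proof -
  have "\<forall>i<d. single q (basis_vec p) i \<in> vec_space d"
    using basis_vec_in[OF p] by (auto simp: single_def vec_space_def)
  then obtain M where M: "matches d (single q (basis_vec p)) M"
    using density[of d] by (auto simp: interpolates_def)
  have "M p' q' = mat_unit p q p' q'" if p': "p' < d" and q': "q' < d" for p' q'
  proof -
    have "M p' q' = mat_vec d M (basis_vec q') p'" using mat_vec_basis[OF q', of M] p' by simp
    also have "\<dots> = single q (basis_vec p) q' p'" using M q' by (simp add: matches_def)
    finally show ?thesis by (simp add: single_def mat_unit_def basis_vec_def)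
  qed
  then show ?thesis using M by (auto simp: matches_def)
qed

end

text \<open>factor_op r d i M is 1 (x) ... (x) M (x) ... (x) 1 with M in the i-th slot.\<close>
definition factor_op ::
  "nat \<Rightarrow> (nat \<Rightarrow> nat) \<Rightarrow> nat \<Rightarrow> (nat \<Rightarrow> nat \<Rightarrow> 'a::field) \<Rightarrow> (nat list \<Rightarrow> 'a) \<Rightarrow> (nat list \<Rightarrow> 'a)" where
  "factor_op r d i M c = (\<lambda>js. if js \<in> tidx r d then (\<Sum>l<d i. M (js ! i) l * c (js[i := l])) else 0)"

lemma tidx_update: "js \<in> tidx r d \<Longrightarrow> i < r \<Longrightarrow> l < d i \<Longrightarrow> js[i := l] \<in> tidx r d"
  by (auto simp: tidx_def nth_list_update)

lemma tidx_finite: "finite (tidx r d)"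
proof -
  have "tidx r d \<subseteq> {xs. set xs \<subseteq> (\<Union>i<r. {..<d i}) \<and> length xs = r}"
    by (fastforce simp: tidx_def in_set_conv_nth)
  moreover have "finite {xs. set xs \<subseteq> (\<Union>i<r. {..<d i}) \<and> length xs = r}"
    by (rule finite_lists_length_eq) auto
  ultimately show ?thesis using finite_subset by blast
qed

lemma tensor_act_factor_op:
  "tensor_act N r d \<rho> b x k c = (\<lambda>js. \<Sum>i<r. eval_mono N (b i) k * factor_op r d i (\<rho> i x) c js)"
  by (auto simp: tensor_act_def factor_op_def fun_eq_iff)

lemma factor_op_cong:
  "(\<forall>p<d i. \<forall>q<d i. M p q = M' p q) \<Longrightarrow> i < r \<Longrightarrow> factor_op r d i M c = factor_op r d i M' c"
  by (auto simp: factor_op_def tidx_def fun_eq_iff intro!: sum.cong)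

lemma factor_op_add:
  "factor_op r d i (\<lambda>p q. M p q + M' p q) c = (\<lambda>js. factor_op r d i M c js + factor_op r d i M' c js)"
  by (auto simp: factor_op_def fun_eq_iff distrib_right sum.distrib)

lemma factor_op_scale: "factor_op r d i (\<lambda>p q. a * M p q) c = (\<lambda>js. a * factor_op r d i M c js)"
  by (auto simp: factor_op_def fun_eq_iff sum_distrib_left mult.assoc)

lemma factor_op_zero: "factor_op r d i (\<lambda>p q. 0) c = (\<lambda>_. 0)"
  by (auto simp: factor_op_def fun_eq_iff)

lemma factor_op_mult:
  assumes i: "i < r"
  shows "factor_op r d i (mat_mult (d i) M M') c = factor_op r d i M (factor_op r d i M' c)"
proof
  fix js show "factor_op r d i (mat_mult (d i) M M') c js = factor_op r d i M (factor_op r d i M' c) js"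
  proof (cases "js \<in> tidx r d")
    case True
    have il: "i < length js" using True i by (simp add: tidx_def)
    have "factor_op r d i M (factor_op r d i M' c) js
        = (\<Sum>l<d i. M (js ! i) l * (\<Sum>l'<d i. M' l l' * c (js[i := l'])))"
      unfolding factor_op_def using True tidx_update[OF True i] il by (auto intro!: sum.cong)
    also have "\<dots> = (\<Sum>l'<d i. (\<Sum>l<d i. M (js ! i) l * M' l l') * c (js[i := l']))"
      by (simp add: sum_distrib_left sum_distrib_right mult.assoc) (rule sum.swap)
    finally show ?thesis using True by (simp add: factor_op_def mat_mult_def)
  qed (simp add: factor_op_def)
qed

lemma factor_op_id:
  assumes i: "i < r" and c: "c \<in> tensor_space r d"
  shows "factor_op r d i id_mat c = c"
proof
  fix js show "factor_op r d i id_mat c js = c js"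
  proof (cases "js \<in> tidx r d")
    case True
    have "(\<Sum>l<d i. id_mat (js ! i) l * c (js[i := l])) = (\<Sum>l<d i. if l = js ! i then c (js[i := l]) else 0)"
      by (rule sum.cong) (auto simp: id_mat_def)
    also have "\<dots> = c js" using True i by (simp add: sum.delta' tidx_def)
    finally show ?thesis using True by (simp add: factor_op_def)
  qed (use c in \<open>simp add: factor_op_def tensor_space_def\<close>)
qed

lemma factor_op_mat_unit:
  assumes i: "i < r" and q: "q < d i"
  shows "factor_op r d i (mat_unit p q) c = (\<lambda>js. if js \<in> tidx r d \<and> js ! i = p then c (js[i := q]) else 0)"
proof
  fix js
  have "(\<Sum>l<d i. mat_unit p q (js ! i) l * c (js[i := l]))
      = (\<Sum>l<d i. if l = q then (if js ! i = p then c (js[i := l]) else 0) else 0)"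
    by (rule sum.cong) (auto simp: mat_unit_def)
  also have "\<dots> = (if js ! i = p then c (js[i := q]) else 0)" using q by (simp add: sum.delta')
  finally have sum_eq: "(\<Sum>l<d i. mat_unit p q (js ! i) l * c (js[i := l]))
      = (if js ! i = p then c (js[i := q]) else 0)" .
  show "factor_op r d i (mat_unit p q) c js
      = (if js \<in> tidx r d \<and> js ! i = p then c (js[i := q]) else 0)"
    unfolding factor_op_def sum_eq by simp
qed

lemma tensor_space_nontrivial:
  assumes d: "\<forall>i<r. d i \<ge> 1"
  shows "(tensor_space r d :: (nat list \<Rightarrow> 'a::field) set) \<noteq> {\<lambda>_. 0}"
proof
  assume triv: "(tensor_space r d :: (nat list \<Rightarrow> 'a) set) = {\<lambda>_. 0}"
  define js0 where "js0 = replicate r (0::nat)"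
  have "js0 \<in> tidx r d" using d by (auto simp: js0_def tidx_def)
  then have "(\<lambda>js. if js = js0 then (1::'a) else 0) \<in> tensor_space r d"
    by (auto simp: tensor_space_def)
  then have "(\<lambda>js. if js = js0 then (1::'a) else 0) = (\<lambda>_. 0)" using triv by blast
  then show False by (metis one_neq_zero)
qed

text \<open>A subspace W stable under all single-factor matrix units that contains a tensor c
  with c(js0) \<noteq> 0 contains a tensor supported on the tuples agreeing with a given
  js1 \<in> tidx r d in the first n positions and nonzero somewhere: apply E_(js1!n, js0!n)
  on factor n to move the n-th index.\<close>
lemma support_narrowing:
  fixes W :: "(nat list \<Rightarrow> 'a::field) set"
  assumes W: "W \<subseteq> tensor_space r d"
    and units: "\<forall>i<r. \<forall>p<d i. \<forall>q<d i. \<forall>c\<in>W. factor_op r d i (mat_unit p q) c \<in> W"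
    and c: "c \<in> W" "c \<noteq> (\<lambda>_. 0)" and js1: "js1 \<in> tidx r d" and n: "n \<le> r"
  shows "\<exists>c\<in>W. (\<forall>js. c js \<noteq> 0 \<longrightarrow> js \<in> tidx r d \<and> (\<forall>i<n. js ! i = js1 ! i)) \<and> (\<exists>js. c js \<noteq> 0)"
  using n
proof (induction n)
  case 0
  have "\<forall>js. c js \<noteq> 0 \<longrightarrow> js \<in> tidx r d" using c W by (auto simp: tensor_space_def)
  then show ?case using c by (auto simp: fun_eq_iff)
next
  case (Suc n)
  then have nr: "n < r" by simp
  obtain c0 js0 where c0: "c0 \<in> W" "\<forall>js. c0 js \<noteq> 0 \<longrightarrow> js \<in> tidx r d \<and> (\<forall>i<n. js ! i = js1 ! i)"
    "c0 js0 \<noteq> 0" using Suc by auto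
  have js0: "js0 \<in> tidx r d" using c0 by blast
  define p where "p = js1 ! n"
  define q where "q = js0 ! n"
  have pd: "p < d n" using js1 nr by (simp add: p_def tidx_def)
  have qd: "q < d n" using js0 nr by (simp add: q_def tidx_def)
  define c' where "c' = factor_op r d n (mat_unit p q) c0"
  have c'W: "c' \<in> W" unfolding c'_def using units nr pd qd c0(1) by blast
  have c'_eq: "c' = (\<lambda>js. if js \<in> tidx r d \<and> js ! n = p then c0 (js[n := q]) else 0)"
    unfolding c'_def by (rule factor_op_mat_unit[of n r q d, OF nr qd])
  have supp: "js \<in> tidx r d \<and> (\<forall>i<Suc n. js ! i = js1 ! i)" if "c' js \<noteq> 0" for js
  proof -
    have js: "js \<in> tidx r d" "js ! n = p" "c0 (js[n := q]) \<noteq> 0"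
      using that unfolding c'_eq by (meson)+
    then have "\<forall>i<n. js ! i = js1 ! i" using c0(2) by (auto simp: nth_list_update)
    then show ?thesis using js(1,2) unfolding p_def less_Suc_eq by blast
  qed
  have "c' (js0[n := p]) \<noteq> 0"
  proof -
    have ln: "n < length js0" using js0 nr by (simp add: tidx_def)
    then have "js0[n := p] ! n = p" "(js0[n := p])[n := q] = js0" by (simp_all add: q_def)
    then show ?thesis using c0(3) tidx_update[OF js0 nr pd] by (simp add: c'_eq)
  qed
  then show ?case using c'W supp by blast
qed

text \<open>Such a subspace, if nonzero, is the whole tensor space: narrowing the support to a
  single tuple yields every basis tensor.\<close>
lemma unit_stable_subspace_full:
  fixes W :: "(nat list \<Rightarrow> 'a::field) set"
  assumes W: "F_subspace W" "W \<subseteq> tensor_space r d"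
    and units: "\<forall>i<r. \<forall>p<d i. \<forall>q<d i. \<forall>c\<in>W. factor_op r d i (mat_unit p q) c \<in> W"
    and c: "c \<in> W" "c \<noteq> (\<lambda>_. 0)"
  shows "W = tensor_space r d"
proof
  have basis: "(\<lambda>js. if js = js1 then 1 else 0) \<in> W" if js1: "js1 \<in> tidx r d" for js1
  proof -
    obtain c1 js2 where c1: "c1 \<in> W" "\<forall>js. c1 js \<noteq> 0 \<longrightarrow> js \<in> tidx r d \<and> (\<forall>i<r. js ! i = js1 ! i)"
      "c1 js2 \<noteq> 0" using support_narrowing[OF W(2) units c js1 order_refl] by blast
    have only: "js = js1" if "c1 js \<noteq> 0" for js
    proof -
      have js: "js \<in> tidx r d" "\<forall>i<r. js ! i = js1 ! i" using c1(2) that by auto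
      have "length js = r" "length js1 = r" using js(1) js1 by (auto simp: tidx_def)
      then show ?thesis using js(2) by (metis nth_equalityI)
    qed
    have nonzero: "c1 js1 \<noteq> 0" using c1(3) only by blast
    have "(\<lambda>js. inverse (c1 js1) * c1 js) = (\<lambda>js. if js = js1 then 1 else 0)"
    proof
      fix js show "inverse (c1 js1) * c1 js = (if js = js1 then 1 else 0)"
      proof (cases "js = js1")
        case False then have "c1 js = 0" using only by blast
        then show ?thesis using False by simp
      qed (simp add: nonzero)
    qed
    moreover have "(\<lambda>js. inverse (c1 js1) * c1 js) \<in> W" using F_subspace_scale[OF W(1) c1(1)] .
    ultimately show ?thesis by simp
  qed
  show "tensor_space r d \<subseteq> W"
  proof
    fix e :: "nat list \<Rightarrow> 'a" assume e: "e \<in> tensor_space r d"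
    have "(\<lambda>js. \<Sum>js'\<in>tidx r d. e js' * (if js = js' then 1 else 0)) \<in> W"
      by (rule F_subspace_sum[OF W(1)]) (use basis F_subspace_scale[OF W(1)] in blast)
    moreover have "(\<lambda>js. \<Sum>js'\<in>tidx r d. e js' * (if js = js' then 1 else 0)) = e"
      using e tidx_finite[of r d]
      by (auto simp: fun_eq_iff tensor_space_def if_distrib[of "\<lambda>x. _ * x"] sum.delta cong: if_cong)
    ultimately show "e \<in> W" by simp
  qed
qed (use W in simp)

lemma grade_space_shift:
  assumes xi: "\<forall>j<N. \<xi> j \<noteq> 0 \<and> \<xi> j ^ m j = 1"
  shows "grade_space scl N \<sigma> \<xi> (\<lambda>j. k j + int (m j) * l j) = grade_space scl N \<sigma> \<xi> k"
proof -
  have "\<xi> j powi (k j + int (m j) * l j) = \<xi> j powi k j" if "j < N" for j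
    using xi that by (simp add: power_int_add power_int_mult)
  then show ?thesis by (simp add: grade_space_def)
qed

lemma eval_mono_shift:
  assumes b: "\<forall>j<N. bi j \<noteq> 0"
  shows "eval_mono N bi (\<lambda>j. k j + int (m j) * l j) = eval_mono N (\<lambda>j. bi j ^ m j) l * eval_mono N bi k"
  unfolding eval_mono_def prod.distrib[symmetric]
  using b by (intro prod.cong refl) (simp add: power_int_add power_int_mult)

lemma graded_factor_stable:
  fixes W :: "(nat list \<Rightarrow> 'a::field) set"
  assumes W: "F_subspace W"
    and stable: "\<forall>k. \<forall>x\<in>grade_space scl N \<sigma> \<xi> k. \<forall>c\<in>W. tensor_act N r d \<rho> b x k c \<in> W"
    and xi: "\<forall>j<N. \<xi> j \<noteq> 0 \<and> \<xi> j ^ m j = 1"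
    and b: "\<forall>i<r. \<forall>j<N. b i j \<noteq> 0"
    and distinct: "\<forall>i<r. \<forall>i'<r. i \<noteq> i' \<longrightarrow> (\<exists>j<N. b i j ^ m j \<noteq> b i' j ^ m j)"
    and i: "i < r" and x: "x \<in> grade_space scl N \<sigma> \<xi> k" and c: "c \<in> W"
  shows "factor_op r d i (\<rho> i x) c \<in> W"
proof -
  let ?A = "\<lambda>i c js. eval_mono N (b i) k * factor_op r d i (\<rho> i x) c js"
  have shift: "eval_mono N (b i') (\<lambda>j. k j + int (m j) * l j)
      = eval_mono N (\<lambda>j. b i' j ^ m j) l * eval_mono N (b i') k" if "i' < r" for i' l
    using eval_mono_shift[of N "b i'"] b that by simp
  have "\<forall>l. \<forall>c\<in>W. (\<lambda>js. \<Sum>i\<in>{..<r}. eval_mono N (\<lambda>j. b i j ^ m j) l * ?A i c js) \<in> W"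
  proof (intro allI ballI)
    fix l and c assume c: "c \<in> W"
    have "tensor_act N r d \<rho> b x (\<lambda>j. k j + int (m j) * l j) c \<in> W"
      using stable x c grade_space_shift[OF xi] by blast
    moreover have "tensor_act N r d \<rho> b x (\<lambda>j. k j + int (m j) * l j) c
        = (\<lambda>js. \<Sum>i\<in>{..<r}. eval_mono N (\<lambda>j. b i j ^ m j) l * ?A i c js)"
      unfolding tensor_act_factor_op by (intro ext sum.cong refl) (simp add: shift mult.assoc)
    ultimately show "(\<lambda>js. \<Sum>i\<in>{..<r}. eval_mono N (\<lambda>j. b i j ^ m j) l * ?A i c js) \<in> W"
      by simp
  qed
  then have "\<forall>i\<in>{..<r}. \<forall>c\<in>W. ?A i c \<in> W"
    by (rule separate_characters[OF finite_lessThan W]) (use b distinct in auto)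
  moreover have "eval_mono N (b i) k \<noteq> 0" using b i by (simp add: eval_mono_def)
  ultimately show ?thesis using F_subspace_unscale[OF W] i c by blast
qed

lemma factor_stable_span:
  fixes W :: "(nat list \<Rightarrow> 'a::field) set"
  assumes vs: "vector_space scl" and W: "F_subspace W" and i: "i < r"
    and rep: "lie_rep scl br (d i) (\<rho> i)"
    and span: "module.span scl G = UNIV"
    and G: "\<forall>x\<in>G. \<forall>c\<in>W. factor_op r d i (\<rho> i x) c \<in> W"
  shows "\<forall>c\<in>W. factor_op r d i (\<rho> i x) c \<in> W"
proof -
  interpret V: vector_space scl by (rule vs)
  define S where "S = {x. \<forall>c\<in>W. factor_op r d i (\<rho> i x) c \<in> W}"
  have lin: "factor_op r d i (\<rho> i (scl a x + y)) c
      = (\<lambda>js. a * factor_op r d i (\<rho> i x) c js + factor_op r d i (\<rho> i y) c js)" for a x y c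
  proof -
    have "factor_op r d i (\<rho> i (scl a x + y)) c = factor_op r d i (\<lambda>p q. a * \<rho> i x p q + \<rho> i y p q) c"
      using rep i by (intro factor_op_cong) (auto simp: lie_rep_def)
    then show ?thesis by (simp add: factor_op_add factor_op_scale)
  qed
  have closed: "scl a x + y \<in> S" if x: "x \<in> S" and y: "y \<in> S" for a x y
  proof -
    have "factor_op r d i (\<rho> i (scl a x + y)) c \<in> W" if c: "c \<in> W" for c
    proof -
      have "factor_op r d i (\<rho> i x) c \<in> W" "factor_op r d i (\<rho> i y) c \<in> W"
        using x y c by (simp_all add: S_def)
      then have "(\<lambda>js. a * factor_op r d i (\<rho> i x) c js + factor_op r d i (\<rho> i y) c js) \<in> W"
        using F_subspace_add[OF W] F_subspace_scale[OF W] by blast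
      then show ?thesis by (simp only: lin)
    qed
    then show ?thesis by (simp add: S_def)
  qed
  have "V.subspace S"
  proof (rule V.subspaceI)
    have "\<rho> i 0 p q = 0" if "p < d i" "q < d i" for p q
    proof -
      have "\<rho> i (scl (-1) 0 + 0) p q = (-1) * \<rho> i 0 p q + \<rho> i 0 p q"
        using rep that unfolding lie_rep_def by blast
      then show ?thesis by simp
    qed
    then have "factor_op r d i (\<rho> i 0) c = factor_op r d i (\<lambda>p q. 0) c" for c
      using i by (intro factor_op_cong) auto
    then show "0 \<in> S" using F_subspace_zero[OF W] by (simp add: S_def factor_op_zero)
    then show "x + y \<in> S" if "x \<in> S" "y \<in> S" for x y using closed[OF that, of 1] by simp
    show "scl a x \<in> S" if "x \<in> S" for a x using closed[OF that \<open>0 \<in> S\<close>, of a] by simp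
  qed
  moreover have "G \<subseteq> S" using G by (auto simp: S_def)
  ultimately have "V.span G \<subseteq> S" by (intro V.span_minimal)
  then have "UNIV \<subseteq> S" using span by simp
  then show ?thesis by (auto simp: S_def)
qed

text \<open>Step (3): by Burnside's theorem, stability under all of rho_i(g) on factor i
  gives stability under every matrix unit on factor i.\<close>
lemma factor_units_stable:
  fixes W :: "(nat list \<Rightarrow> 'a::field) set"
  assumes alg: "alg_closed TYPE('a)" and W: "F_subspace W" "W \<subseteq> tensor_space r d"
    and i: "i < r" and irr: "irreducible_rep scl br (d i) (\<rho> i)"
    and stable: "\<forall>x. \<forall>c\<in>W. factor_op r d i (\<rho> i x) c \<in> W"
    and p: "p < d i" and q: "q < d i"
  shows "\<forall>c\<in>W. factor_op r d i (mat_unit p q) c \<in> W"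
proof -
  define A where "A = {M. \<forall>c\<in>W. factor_op r d i M c \<in> W}"
  interpret irreducible_matrix_algebra "d i" A
  proof
    show "d i \<ge> 1" using irr by (simp add: irreducible_rep_def)
    show "(\<lambda>p q. M p q + M' p q) \<in> A" if "M \<in> A" "M' \<in> A" for M M'
      using that F_subspace_add[OF W(1)] by (simp add: A_def factor_op_add)
    show "(\<lambda>p q. c * M p q) \<in> A" if "M \<in> A" for M c
      using that F_subspace_scale[OF W(1)] by (simp add: A_def factor_op_scale)
    show "mat_mult (d i) M M' \<in> A" if "M \<in> A" "M' \<in> A" for M M'
      using that by (simp add: A_def factor_op_mult[OF i])
    show "id_mat \<in> A" unfolding A_def
    proof (intro CollectI ballI)
      fix c assume c: "c \<in> W"
      then have "factor_op r d i id_mat c = c" using factor_op_id[OF i] W(2) by blast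
      then show "factor_op r d i id_mat c \<in> W" using c by simp
    qed
    show "U = {\<lambda>_. 0} \<or> U = vec_space (d i)"
      if "F_subspace U" "U \<subseteq> vec_space (d i)" "\<forall>M\<in>A. \<forall>v\<in>U. mat_vec (d i) M v \<in> U" for U
    proof -
      have "\<rho> i x \<in> A" for x using stable by (simp add: A_def)
      then show ?thesis using irr that unfolding irreducible_rep_def by blast
    qed
  qed (rule alg)
  obtain M where M: "M \<in> A" "\<forall>p'<d i. \<forall>q'<d i. M p' q' = mat_unit p q p' q'"
    using burnside[OF p q] by blast
  have "factor_op r d i (mat_unit p q) c = factor_op r d i M c" for c
    using M(2) i by (intro factor_op_cong) auto
  then show ?thesis using M(1) by (simp add: A_def)
qed

theorem theorem4p4:
  fixes scl :: "'a::field_char_0 \<Rightarrow> 'g::ab_group_add \<Rightarrow> 'g"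
    and br :: "'g \<Rightarrow> 'g \<Rightarrow> 'g"
    and N :: nat and \<sigma> :: "nat \<Rightarrow> 'g \<Rightarrow> 'g" and m :: "nat \<Rightarrow> nat" and \<xi> :: "nat \<Rightarrow> 'a"
    and r :: nat and d :: "nat \<Rightarrow> nat" and \<rho> :: "nat \<Rightarrow> 'g \<Rightarrow> nat \<Rightarrow> nat \<Rightarrow> 'a"
    and b :: "nat \<Rightarrow> nat \<Rightarrow> 'a"
  assumes "alg_closed TYPE('a)"
    and "simple_lie_algebra scl br"
    and "\<forall>i<N. lie_automorphism scl br (\<sigma> i) \<and> has_order (\<sigma> i) (m i)"
    and "\<forall>i<N. \<forall>j<N. \<sigma> i \<circ> \<sigma> j = \<sigma> j \<circ> \<sigma> i"
    and "\<forall>i<N. primitive_root (\<xi> i) (m i)"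
    and "\<forall>i<r. irreducible_rep scl br (d i) (\<rho> i)"
    and "\<forall>i<r. \<forall>j<N. b i j \<noteq> 0"
    and "\<forall>i<r. \<forall>i'<r. i \<noteq> i' \<longrightarrow> (\<exists>j<N. b i j ^ m j \<noteq> b i' j ^ m j)"
  shows "simple_multiloop_tensor_module scl N \<sigma> \<xi> r d \<rho> b"
proof -
  have vs: "vector_space scl" using assms(2) by (simp add: simple_lie_algebra_def lie_algebra_def)
  have xi: "\<forall>j<N. \<xi> j \<noteq> 0 \<and> \<xi> j ^ m j = 1" and m0: "\<forall>j<N. of_nat (m j) \<noteq> (0::'a)"
    using assms(5) by (auto simp: primitive_root_def power_0_left)
  have span: "module.span scl (\<Union>k. grade_space scl N \<sigma> \<xi> k) = UNIV"
    using grade_spaces_span[OF vs _ _ assms(5,4) m0] assms(3)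
    by (simp add: lie_automorphism_def has_order_def)
  have d1: "\<forall>i<r. d i \<ge> 1" using assms(6) by (simp add: irreducible_rep_def)
  show ?thesis unfolding simple_multiloop_tensor_module_def
  proof (intro conjI allI impI)
    show "(tensor_space r d :: (nat list \<Rightarrow> 'a) set) \<noteq> {\<lambda>_. 0}" using tensor_space_nontrivial[OF d1] .
    fix W :: "(nat list \<Rightarrow> 'a) set"
    assume "F_subspace W \<and> W \<subseteq> tensor_space r d \<and>
      (\<forall>k. \<forall>x\<in>grade_space scl N \<sigma> \<xi> k. \<forall>c\<in>W. tensor_act N r d \<rho> b x k c \<in> W)"
    then have W: "F_subspace W" "W \<subseteq> tensor_space r d"
      and stable: "\<forall>k. \<forall>x\<in>grade_space scl N \<sigma> \<xi> k. \<forall>c\<in>W. tensor_act N r d \<rho> b x k c \<in> W" by auto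
    have "\<forall>c\<in>W. factor_op r d i (\<rho> i x) c \<in> W" if i: "i < r" for i x
      using factor_stable_span[OF vs W(1) i _ span] assms(6) i
        graded_factor_stable[OF W(1) stable xi assms(7,8) i] by (auto simp: irreducible_rep_def)
    then have "\<forall>i<r. \<forall>p<d i. \<forall>q<d i. \<forall>c\<in>W. factor_op r d i (mat_unit p q) c \<in> W"
      using factor_units_stable[OF assms(1) W] assms(6) by blast
    then show "W = {\<lambda>_. 0} \<or> W = tensor_space r d"
      using unit_stable_subspace_full[OF W] F_subspace_zero[OF W(1)] by blast
  qed
qed

end
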